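(* Let $\gamma:I\to\mathbb{R}^2$ be a smooth curve, star-shaped with respect to the origin and parametrized so that $[\gamma(t),\gamma'(t)]=1$, and let $p$ be its centroaffine curvature, defined by $\gamma''=-p\gamma$. Assume $p(t)\neq0$ and $p'(t)\neq 0$ for all $t\in I$. Then for any $t_0\neq t_1$ in $I$, the osculating central conics of $\gamma$ at $\gamma(t_0)$ and $\gamma(t_1)$ are disjoint and nested.
   Context: $[u,v]$ denotes the determinant of the $2\times2$ matrix with columns $u,v$; a curve is star-shaped with respect to the origin if $[\gamma,\gamma']\neq0$. A central conic is a curve $Q(X,Y):=aX^2+2bXY+cY^2=1$; it is an ellipse if $ac-b^2>0$ and a hyperbola if $ac-b^2<0$. The osculating central conic of $\gamma$ at $\gamma(t)$ is the central conic tangent to $\gamma$ at $\gamma(t)$ whose determinant $ac-b^2$ equals $p(t)$; explicitly, writing $\gamma=(x,y)$, its coefficients are $a=py^2+(y')^2$, $b=-(pxy+x'y')$, $c=px^2+(x')^2$. Two central conics $Q_1=1$, $Q_2=1$ are called nested if one of the sets $\{Q_1\ge 1\}$, $\{Q_2\ge1\}$ contains the other (for ellipses this is equivalent to one of the closed regions they bound containing the other). *)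

theory Defs
  imports "HOL-Analysis.Analysis"
begin

definition smooth_on :: "real set \<Rightarrow> (real \<Rightarrow> real) \<Rightarrow> bool" where
  "smooth_on I f \<longleftrightarrow> (\<forall>n. \<forall>t\<in>I. ((deriv ^^ n) f) differentiable (at t))"

definition det2 :: "real \<times> real \<Rightarrow> real \<times> real \<Rightarrow> real" where
  "det2 u v = fst u * snd v - snd u * fst v"

definition conic_form :: "real \<times> real \<times> real \<Rightarrow> real \<times> real \<Rightarrow> real" where
  "conic_form C z = (case C of (a, b, c) \<Rightarrow> case z of (X, Y) \<Rightarrow>
      a * X^2 + 2 * b * X * Y + c * Y^2)"

definition central_conic :: "real \<times> real \<times> real \<Rightarrow> (real \<times> real) set" where
  "central_conic C = {z. conic_form C z = 1}"

definition nested_conics :: "real \<times> real \<times> real \<Rightarrow> real \<times> real \<times> real \<Rightarrow> bool" where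
  "nested_conics C1 C2 \<longleftrightarrow>
     {z. conic_form C1 z \<ge> 1} \<subseteq> {z. conic_form C2 z \<ge> 1} \<or>
     {z. conic_form C2 z \<ge> 1} \<subseteq> {z. conic_form C1 z \<ge> 1}"

definition osc_conic :: "(real \<Rightarrow> real) \<Rightarrow> (real \<Rightarrow> real) \<Rightarrow> (real \<Rightarrow> real) \<Rightarrow> real
    \<Rightarrow> real \<times> real \<times> real" where
  "osc_conic x y p t =
     (p t * (y t)^2 + (deriv y t)^2,
      - (p t * x t * y t + deriv x t * deriv y t),
      p t * (x t)^2 + (deriv x t)^2)"

end

theory Submission
  imports Defs
begin

(* For a fixed point z = (X, Y), the osculating conic form at time t takes the value
   Q_t(z) = p (X y - Y x)^2 + (X y' - Y x')^2, and the equation gamma'' = - p gamma makes its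
   t-derivative collapse to p' (X y - Y x)^2. By Darboux' theorem p' has constant sign, so
   Q_t(z) is monotone in t; it is even strictly monotone for z <> 0, because X y - Y x and
   its derivative X y' - Y x' cannot vanish simultaneously when [gamma, gamma'] <> 0. Hence
   one of the two forms is strictly smaller than the other away from the origin, which makes
   the conics Q = 1 disjoint and nested. *)

lemma darboux_zero:
  fixes g q :: "real \<Rightarrow> real"
  assumes ab: "a < b" and deriv_g: "\<forall>t\<in>{a..b}. (g has_real_derivative q t) (at t)"
    and qa: "q a < 0" and qb: "q b > 0"
  shows "\<exists>c. a < c \<and> c < b \<and> q c = 0"
proof -
  have "continuous_on {a..b} g"
    using deriv_g by (meson DERIV_isCont continuous_at_imp_continuous_on)
  then obtain c where c: "c \<in> {a..b}" and min: "\<forall>t\<in>{a..b}. g c \<le> g t"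
    using continuous_attains_inf[of "{a..b}" g] ab by auto
  have "c \<noteq> a"
  proof
    assume "c = a"
    obtain e where e: "e > 0" "\<forall>h>0. h < e \<longrightarrow> g a > g (a + h)"
      using DERIV_neg_dec_right[OF _ qa, of g] deriv_g ab by (meson atLeastAtMost_iff less_imp_le order_refl)
    then have "g a > g (a + min (e/2) (b - a))" and "a + min (e/2) (b - a) \<in> {a..b}"
      using ab by auto
    then show False using min \<open>c = a\<close> by (metis not_le)
  qed
  moreover have "c \<noteq> b"
  proof
    assume "c = b"
    obtain e where e: "e > 0" "\<forall>h>0. h < e \<longrightarrow> g (b - h) < g b"
      using DERIV_pos_inc_left[OF _ qb, of g] deriv_g ab by (meson atLeastAtMost_iff less_imp_le order_refl)
    then have "g b > g (b - min (e/2) (b - a))" and "b - min (e/2) (b - a) \<in> {a..b}"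
      using ab by auto
    then show False using min \<open>c = b\<close> by (metis not_le)
  qed
  ultimately have ac: "a < c" "c < b" using c by auto
  have "q c = 0"
  proof (rule DERIV_local_min)
    show "(g has_real_derivative q c) (at c)" using deriv_g c by auto
    show "0 < min (c - a) (b - c)" using ac by auto
    show "\<forall>t. \<bar>c - t\<bar> < min (c - a) (b - c) \<longrightarrow> g c \<le> g t"
      using min by (auto simp: abs_less_iff)
  qed
  then show ?thesis using ac by auto
qed

lemma is_interval_atLeastAtMost_subset:
  fixes I :: "real set"
  assumes "is_interval I" "u \<in> I" "v \<in> I"
  shows "{u..v} \<subseteq> I"
  using mem_is_interval_1_I[OF assms] by auto

lemma deriv_nonzero_imp_sign_constant:
  fixes g q :: "real \<Rightarrow> real"
  assumes I: "is_interval I"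
    and deriv_g: "\<forall>t\<in>I. (g has_real_derivative q t) (at t)" and nonzero: "\<forall>t\<in>I. q t \<noteq> 0"
  shows "(\<forall>t\<in>I. q t > 0) \<or> (\<forall>t\<in>I. q t < 0)"
proof (rule ccontr)
  assume "\<not> ?thesis"
  then obtain s t where "s \<in> I" "\<not> q s > 0" "t \<in> I" "\<not> q t < 0" by blast
  then have s: "s \<in> I" "q s < 0" and t: "t \<in> I" "q t > 0"
    using nonzero by (auto simp: not_less le_less)
  have "\<exists>c. min s t < c \<and> c < max s t \<and> q c = 0"
  proof (cases "s < t")
    case True
    show ?thesis
      using darboux_zero[of s t g q] True s t deriv_g is_interval_atLeastAtMost_subset[OF I s(1) t(1)]
      by auto
  next
    case False
    moreover have "s \<noteq> t" using s t by auto
    ultimately have "t < s" by linarith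
    moreover have "\<forall>u\<in>{t..s}. ((\<lambda>u. - g u) has_real_derivative - q u) (at u)"
      using deriv_g is_interval_atLeastAtMost_subset[OF I t(1) s(1)] by (blast intro: DERIV_minus)
    ultimately show ?thesis
      using darboux_zero[of t s "\<lambda>u. - g u" "\<lambda>u. - q u"] s t by auto
  qed
  then obtain c where "min s t < c" "c < max s t" "q c = 0" by blast
  moreover have "{min s t..max s t} \<subseteq> I"
    using is_interval_atLeastAtMost_subset[OF I] s t by (simp add: max_def min_def)
  ultimately show False using nonzero by (meson atLeastAtMost_iff less_imp_le subsetD)
qed

lemma DERIV_zero_if_const_on_interval:
  fixes f :: "real \<Rightarrow> real"
  assumes "(f has_real_derivative d) (at t)" "a < t" "t < b"
    and const: "\<forall>s. a < s \<and> s < b \<longrightarrow> f s = c"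
  shows "d = 0"
proof (rule DERIV_local_const)
  show "(f has_real_derivative d) (at t)" "0 < min (t - a) (b - t)" using assms by auto
  show "\<forall>s. \<bar>t - s\<bar> < min (t - a) (b - t) \<longrightarrow> f t = f s"
  proof (intro allI impI)
    fix s assume "\<bar>t - s\<bar> < min (t - a) (b - t)"
    then have "a < s" "s < b" by (simp_all add: abs_less_iff)
    then show "f t = f s" using const assms(2,3) by simp
  qed
qed

lemma deriv_pos_times_square_imp_less:
  fixes g q h h' :: "real \<Rightarrow> real"
  assumes ab: "a < b"
    and deriv_g: "\<forall>t\<in>{a..b}. (g has_real_derivative q t * (h t)\<^sup>2) (at t)"
    and q_pos: "\<forall>t\<in>{a..b}. q t > 0"
    and deriv_h: "\<forall>t\<in>{a..b}. (h has_real_derivative h' t) (at t)"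
    and no_double_zero: "\<forall>t\<in>{a..b}. h t \<noteq> 0 \<or> h' t \<noteq> 0"
  shows "g a < g b"
proof -
  have mono: "g u \<le> g v" if "a \<le> u" "u \<le> v" "v \<le> b" for u v
  proof (rule DERIV_nonneg_imp_increasing_open[OF that(2)])
    show "continuous_on {u..v} g"
      using deriv_g that by (intro continuous_at_imp_continuous_on ballI DERIV_isCont) auto
    fix t assume "u < t" "t < v"
    then have "t \<in> {a..b}" using that by auto
    then show "\<exists>d. (g has_real_derivative d) (at t) \<and> 0 \<le> d"
      using deriv_g q_pos by (intro exI[of _ "q t * (h t)\<^sup>2"]) (simp add: less_imp_le)
  qed
  show "g a < g b"
  proof (rule ccontr)
    assume "\<not> g a < g b"
    have const: "g t = g a" if "a < t" "t < b" for t
      using mono[of a t] mono[of t b] that \<open>\<not> g a < g b\<close> by simp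
    have h_zero: "h t = 0" if "a < t" "t < b" for t
    proof -
      have "q t * (h t)\<^sup>2 = 0"
        by (rule DERIV_zero_if_const_on_interval[of g _ t a b "g a"]) (use deriv_g that const in auto)
      moreover have "q t > 0" using q_pos that by simp
      ultimately show ?thesis by simp
    qed
    define m where "m = (a + b) / 2"
    have m: "a < m" "m < b" using ab by (auto simp: m_def)
    then have "h' m = 0"
      by (intro DERIV_zero_if_const_on_interval[of h _ m a b 0]) (use deriv_h h_zero in auto)
    then show False using no_double_zero h_zero[OF m] m by auto
  qed
qed

definition conic_below :: "real \<times> real \<times> real \<Rightarrow> real \<times> real \<times> real \<Rightarrow> bool" where
  "conic_below C D \<longleftrightarrow> (\<forall>z. z \<noteq> (0, 0) \<longrightarrow> conic_form C z < conic_form D z)"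

lemma conic_form_origin [simp]: "conic_form C (0, 0) = 0"
  by (simp add: conic_form_def split: prod.splits)

lemma conic_below_imp_le:
  assumes "conic_below C D"
  shows "conic_form C z \<le> conic_form D z"
proof (cases "z = (0, 0)")
  case False
  with assms show ?thesis unfolding conic_below_def by (blast intro: less_imp_le)
qed simp

lemma conic_below_imp_disjoint:
  assumes "conic_below C D"
  shows "central_conic C \<inter> central_conic D = {}"
proof -
  have False if "conic_form C z = 1" "conic_form D z = 1" for z
  proof -
    from that have "z \<noteq> (0, 0)" by auto
    with assms have "conic_form C z < conic_form D z" unfolding conic_below_def by blast
    with that show False by simp
  qed
  then show ?thesis unfolding central_conic_def by blast
qed

lemma conic_below_imp_nested:
  assumes "conic_below C D"
  shows "nested_conics C D"
  unfolding nested_conics_def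
proof (rule disjI1, rule subsetI)
  fix z assume "z \<in> {z. 1 \<le> conic_form C z}"
  then show "z \<in> {z. 1 \<le> conic_form D z}"
    using conic_below_imp_le[OF assms, of z] by simp
qed

lemma comparable_conics_disjoint_nested:
  assumes "conic_below C D \<or> conic_below D C"
  shows "central_conic C \<inter> central_conic D = {} \<and> nested_conics C D"
proof (cases "conic_below C D")
  case True
  then show ?thesis using conic_below_imp_disjoint conic_below_imp_nested by blast
next
  case False
  with assms have "conic_below D C" by blast
  then have "central_conic D \<inter> central_conic C = {}" "nested_conics D C"
    by (rule conic_below_imp_disjoint, rule conic_below_imp_nested)
  moreover have "nested_conics D C \<Longrightarrow> nested_conics C D"
    unfolding nested_conics_def by (simp only: disj_commute)
  ultimately show ?thesis by (simp add: Int_commute)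
qed

lemma osc_conic_form:
  "conic_form (osc_conic x y p t) (X, Y) =
     p t * (X * y t - Y * x t)\<^sup>2 + (X * deriv y t - Y * deriv x t)\<^sup>2"
  by (simp add: conic_form_def osc_conic_def power2_eq_square algebra_simps)

lemma osc_conic_form_has_real_derivative:
  assumes "(x has_real_derivative deriv x t) (at t)" "(y has_real_derivative deriv y t) (at t)"
    and "(deriv x has_real_derivative - p t * x t) (at t)"
    and "(deriv y has_real_derivative - p t * y t) (at t)"
    and "(p has_real_derivative p' t) (at t)"
  shows "((\<lambda>t. conic_form (osc_conic x y p t) (X, Y)) has_real_derivative
           p' t * (X * y t - Y * x t)\<^sup>2) (at t)"
  unfolding osc_conic_form
  by (rule derivative_eq_intros assms refl | simp add: algebra_simps power2_eq_square)+

lemma det2_nonzero_imp_independent: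
  assumes "det2 (x, y) (x', y') \<noteq> 0" "X * y - Y * x = 0" "X * y' - Y * x' = 0"
  shows "X = 0 \<and> Y = 0"
proof -
  have "X * (x * y' - y * x') = x * (X * y' - Y * x') - x' * (X * y - Y * x)"
    and "Y * (x * y' - y * x') = y * (X * y' - Y * x') - y' * (X * y - Y * x)"
    by (simp_all add: algebra_simps)
  then have "X * (x * y' - y * x') = 0" "Y * (x * y' - y * x') = 0"
    using assms(2,3) by simp_all
  then show ?thesis using assms(1) by (simp add: det2_def)
qed

lemma osc_conics_strictly_monotone:
  fixes x y p :: "real \<Rightarrow> real"
  assumes I: "is_interval I"
    and dx: "\<forall>t\<in>I. (x has_real_derivative deriv x t) (at t)"
    and dy: "\<forall>t\<in>I. (y has_real_derivative deriv y t) (at t)"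
    and ddx: "\<forall>t\<in>I. (deriv x has_real_derivative - p t * x t) (at t)"
    and ddy: "\<forall>t\<in>I. (deriv y has_real_derivative - p t * y t) (at t)"
    and dp: "\<forall>t\<in>I. (p has_real_derivative deriv p t) (at t) \<and> deriv p t \<noteq> 0"
    and star: "\<forall>t\<in>I. det2 (x t, y t) (deriv x t, deriv y t) \<noteq> 0"
    and ab: "a < b" "a \<in> I" "b \<in> I"
  shows "conic_below (osc_conic x y p a) (osc_conic x y p b) \<or>
         conic_below (osc_conic x y p b) (osc_conic x y p a)"
proof -
  let ?Q = "\<lambda>X Y t. conic_form (osc_conic x y p t) (X, Y)"
  have ab_I: "{a..b} \<subseteq> I" using is_interval_atLeastAtMost_subset[OF I ab(2,3)] .
  have dQ: "\<forall>t\<in>{a..b}. (?Q X Y has_real_derivative deriv p t * (X * y t - Y * x t)\<^sup>2) (at t)"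
    for X Y using ab_I dx dy ddx ddy dp by (intro ballI osc_conic_form_has_real_derivative) auto
  have dh: "\<forall>t\<in>{a..b}. ((\<lambda>t. X * y t - Y * x t) has_real_derivative X * deriv y t - Y * deriv x t) (at t)"
    for X Y using ab_I dx dy by (auto intro!: derivative_eq_intros)
  have no_double_zero:
    "\<forall>t\<in>{a..b}. X * y t - Y * x t \<noteq> 0 \<or> X * deriv y t - Y * deriv x t \<noteq> 0"
    if "(X, Y) \<noteq> (0, 0)" for X Y
  proof
    fix t assume "t \<in> {a..b}"
    then have "det2 (x t, y t) (deriv x t, deriv y t) \<noteq> 0" using ab_I star by auto
    then show "X * y t - Y * x t \<noteq> 0 \<or> X * deriv y t - Y * deriv x t \<noteq> 0"
      using det2_nonzero_imp_independent that by blast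
  qed
  from deriv_nonzero_imp_sign_constant[OF I, of p "deriv p"] dp
  consider "\<forall>t\<in>I. deriv p t > 0" | "\<forall>t\<in>I. deriv p t < 0" by blast
  then show ?thesis
  proof cases
    case 1
    have "\<forall>t\<in>{a..b}. deriv p t > 0" using 1 ab_I by auto
    then have "?Q X Y a < ?Q X Y b" if "(X, Y) \<noteq> (0, 0)" for X Y
      by (rule deriv_pos_times_square_imp_less[OF ab(1) dQ _ dh no_double_zero[OF that]])
    then show ?thesis unfolding conic_below_def by auto
  next
    case 2
    have "- ?Q X Y a < - ?Q X Y b" if "(X, Y) \<noteq> (0, 0)" for X Y
    proof (rule deriv_pos_times_square_imp_less[OF ab(1) _ _ dh no_double_zero[OF that]])
      show "\<forall>t\<in>{a..b}. ((\<lambda>t. - ?Q X Y t) has_real_derivative - deriv p t * (X * y t - Y * x t)\<^sup>2) (at t)"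
      proof
        fix t assume "t \<in> {a..b}"
        from DERIV_minus[OF dQ[rule_format, OF this]]
        show "((\<lambda>t. - ?Q X Y t) has_real_derivative - deriv p t * (X * y t - Y * x t)\<^sup>2) (at t)"
          by simp
      qed
      show "\<forall>t\<in>{a..b}. 0 < - deriv p t" using 2 ab_I by auto
    qed
    then show ?thesis unfolding conic_below_def by auto
  qed
qed

lemma smooth_on_has_real_derivative:
  assumes "smooth_on I f" "t \<in> I"
  shows "((deriv ^^ n) f has_real_derivative (deriv ^^ Suc n) f t) (at t)"
  using assms unfolding smooth_on_def by (simp add: DERIV_deriv_iff_real_differentiable)

theorem theorem2:
  fixes x y p :: "real \<Rightarrow> real" and I :: "real set"
  assumes I_interval: "is_interval I" and I_open: "open I"
    and smooth_x: "smooth_on I x" and smooth_y: "smooth_on I y"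
    and star: "\<forall>t\<in>I. det2 (x t, y t) (deriv x t, deriv y t) \<noteq> 0"
    and unimodular: "\<forall>t\<in>I. det2 (x t, y t) (deriv x t, deriv y t) = 1"
    and p_def: "\<forall>t\<in>I. deriv (deriv x) t = - p t * x t \<and> deriv (deriv y) t = - p t * y t"
    and p_nonzero: "\<forall>t\<in>I. p t \<noteq> 0"
    and p'_nonzero: "\<forall>t\<in>I. p differentiable (at t) \<and> deriv p t \<noteq> 0"
    and t0: "t0 \<in> I" and t1: "t1 \<in> I" and ne: "t0 \<noteq> t1"
  shows "central_conic (osc_conic x y p t0) \<inter> central_conic (osc_conic x y p t1) = {}
         \<and> nested_conics (osc_conic x y p t0) (osc_conic x y p t1)"
proof (rule comparable_conics_disjoint_nested)
  have dx: "\<forall>t\<in>I. (x has_real_derivative deriv x t) (at t)"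
    and dy: "\<forall>t\<in>I. (y has_real_derivative deriv y t) (at t)"
    using smooth_on_has_real_derivative[of I _ _ 0] smooth_x smooth_y by simp_all
  have ddx: "\<forall>t\<in>I. (deriv x has_real_derivative - p t * x t) (at t)"
    and ddy: "\<forall>t\<in>I. (deriv y has_real_derivative - p t * y t) (at t)"
    using smooth_on_has_real_derivative[OF smooth_x, of _ 1]
      smooth_on_has_real_derivative[OF smooth_y, of _ 1] p_def by simp_all
  have dp: "\<forall>t\<in>I. (p has_real_derivative deriv p t) (at t) \<and> deriv p t \<noteq> 0"
    using p'_nonzero DERIV_deriv_iff_real_differentiable by blast
  note monotone = osc_conics_strictly_monotone[OF I_interval dx dy ddx ddy dp star]
  from ne consider "t0 < t1" | "t1 < t0" by linarith
  then show "conic_below (osc_conic x y p t0) (osc_conic x y p t1) \<or>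
      conic_below (osc_conic x y p t1) (osc_conic x y p t0)"
    by cases (use monotone t0 t1 in blast)+
qed

end
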